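(* For both \textsc{OneMinMax} and \textsc{LOTZ}, the hypervolume contribution $\mathrm{HVC}(x,P)$ with a reference point $(r_1,r_2)$ satisfying $r_1\le -1$ and $r_2\le -1$ is diversity-favouring on $\{0,1\}^n\setminus\{0^n,1^n\}$.
   Context: Search space $\{0,1\}^n$; objectives maximised. $\textsc{OneMinMax}(x)=(\sum_ix_i,\,n-\sum_ix_i)$; $\textsc{LOTZ}(x)=(\mathrm{LO}(x),\mathrm{TZ}(x))$ with $\mathrm{LO}$ the number of leading ones and $\mathrm{TZ}$ the number of trailing zeros. Dominance: $y$ dominates $x$ if $f_i(y)\ge f_i(x)$ for all $i$, strictly for some $i$. Pareto set $X^*$ (non-dominated points), Pareto front $F^*=f(X^* )$. Populations $P$ are sets of mutually non-dominated points with distinct objective vectors (as maintained by SEMO/GSEMO). HVC: sort $P$ by increasing $f_1$ as $x_1,\dots,x_\mu$, set $f_1(x_0)=r_1$, $f_2(x_{\mu+1})=r_2$, and $\mathrm{HVC}(x_i,P)=(f_1(x_i)-f_1(x_{i-1}))(f_2(x_i)-f_2(x_{i+1}))$. Good: w.r.t. $P$, $x\in P\cap X^*$ is good if some Hamming neighbour $y$ of $x$ satisfies $y\in X^*$ and $f(y)\notin f(P)$; otherwise bad. A measure $\mathrm{score}(x,P)$ is diversity-favouring on $S\subseteq\{0,1\}^n$ (w.r.t. $f$) if for every population $P$ and all $x,y\in P\cap X^*\cap S$ with $x$ bad and $y$ good, $\mathrm{score}(x,P)<\mathrm{score}(y,P)$. *)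

theory Defs
  imports Complex_Main
begin

definition OneMinMax :: "bool list \<Rightarrow> nat \<times> nat" where
  "OneMinMax x = (count_list x True, length x - count_list x True)"

definition LO :: "bool list \<Rightarrow> nat" where
  "LO x = length (takeWhile (\<lambda>b. b) x)"

definition TZ :: "bool list \<Rightarrow> nat" where
  "TZ x = length (takeWhile (\<lambda>b. \<not> b) (rev x))"

definition LOTZ :: "bool list \<Rightarrow> nat \<times> nat" where
  "LOTZ x = (LO x, TZ x)"

definition space :: "nat \<Rightarrow> bool list set" where
  "space n = {x. length x = n}"

definition dominates :: "(bool list \<Rightarrow> nat \<times> nat) \<Rightarrow> bool list \<Rightarrow> bool list \<Rightarrow> bool" where
  "dominates f y x \<longleftrightarrow> fst (f y) \<ge> fst (f x) \<and> snd (f y) \<ge> snd (f x)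
      \<and> (fst (f y) > fst (f x) \<or> snd (f y) > snd (f x))"

definition pareto_set :: "nat \<Rightarrow> (bool list \<Rightarrow> nat \<times> nat) \<Rightarrow> bool list set" where
  "pareto_set n f = {x \<in> space n. \<not> (\<exists>y \<in> space n. dominates f y x)}"

definition population :: "nat \<Rightarrow> (bool list \<Rightarrow> nat \<times> nat) \<Rightarrow> bool list set \<Rightarrow> bool" where
  "population n f P \<longleftrightarrow> finite P \<and> P \<subseteq> space n \<and> inj_on f P
      \<and> (\<forall>x \<in> P. \<forall>y \<in> P. \<not> dominates f y x)"

definition hamming_neighbour :: "bool list \<Rightarrow> bool list \<Rightarrow> bool" where
  "hamming_neighbour x y \<longleftrightarrow> length x = length y
      \<and> card {i. i < length x \<and> x ! i \<noteq> y ! i} = 1"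

definition good :: "nat \<Rightarrow> (bool list \<Rightarrow> nat \<times> nat) \<Rightarrow> bool list set \<Rightarrow> bool list \<Rightarrow> bool" where
  "good n f P x \<longleftrightarrow> x \<in> P \<inter> pareto_set n f
      \<and> (\<exists>y. hamming_neighbour x y \<and> y \<in> pareto_set n f \<and> f y \<notin> f ` P)"

definition bad :: "nat \<Rightarrow> (bool list \<Rightarrow> nat \<times> nat) \<Rightarrow> bool list set \<Rightarrow> bool list \<Rightarrow> bool" where
  "bad n f P x \<longleftrightarrow> x \<in> P \<inter> pareto_set n f \<and> \<not> good n f P x"

definition diversity_favouring ::
  "nat \<Rightarrow> (bool list \<Rightarrow> nat \<times> nat) \<Rightarrow> (bool list \<Rightarrow> bool list set \<Rightarrow> real) \<Rightarrow> bool list set \<Rightarrow> bool" where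
  "diversity_favouring n f score S \<longleftrightarrow>
     (\<forall>P. population n f P \<longrightarrow>
        (\<forall>x \<in> P \<inter> pareto_set n f \<inter> S. \<forall>y \<in> P \<inter> pareto_set n f \<inter> S.
            bad n f P x \<longrightarrow> good n f P y \<longrightarrow> score x P < score y P))"

text \<open>Hypervolume contribution: with P sorted by increasing first objective, the
  predecessor x_{i-1} of x is the element of P with the largest first objective below
  that of x (or the reference value r1 if none), and the successor x_{i+1} is the element
  with the smallest first objective above that of x (or reference value r2 if none).\<close>
definition hvc :: "(bool list \<Rightarrow> nat \<times> nat) \<Rightarrow> real \<Rightarrow> real \<Rightarrow> bool list \<Rightarrow> bool list set \<Rightarrow> real" where
  "hvc f r1 r2 x P =
     (let L = {y \<in> P. fst (f y) < fst (f x)};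
          R = {y \<in> P. fst (f y) > fst (f x)};
          prev1 = (if L = {} then r1 else real (fst (f (arg_max_on (\<lambda>y. fst (f y)) L))));
          next2 = (if R = {} then r2 else real (snd (f (arg_min_on (\<lambda>y. fst (f y)) R))))
      in (real (fst (f x)) - prev1) * (real (snd (f x)) - next2))"

end

theory Submission
  imports Defs
begin

(* A non-extremal Pareto-optimal point x of OneMinMax or LOTZ has objective vector (k, n - k)
   with 0 < k < n, and its Pareto-optimal Hamming neighbours realise exactly the two adjacent
   front values (k - 1, n - k + 1) and (k + 1, n - k - 1); so x is bad iff both are already
   attained in the population P.  Since P is non-dominated and lies on or below the line
   f1 + f2 = n, the hypervolume box of x has width 1 if (k - 1, n - k + 1) is attained and
   at least 2 otherwise (the reference point r1 <= -1 covers the case of no left neighbour),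
   and likewise for its height.  Hence bad points have HVC 1 and good points HVC at least 2. *)

definition hv_width ::
  "(bool list \<Rightarrow> nat \<times> nat) \<Rightarrow> real \<Rightarrow> bool list \<Rightarrow> bool list set \<Rightarrow> real" where
  "hv_width f r1 x P =
     (let L = {y \<in> P. fst (f y) < fst (f x)}
      in real (fst (f x))
         - (if L = {} then r1 else real (fst (f (arg_max_on (\<lambda>y. fst (f y)) L)))))"

definition hv_height ::
  "(bool list \<Rightarrow> nat \<times> nat) \<Rightarrow> real \<Rightarrow> bool list \<Rightarrow> bool list set \<Rightarrow> real" where
  "hv_height f r2 x P =
     (let R = {y \<in> P. fst (f y) > fst (f x)}
      in real (snd (f x))
         - (if R = {} then r2 else real (snd (f (arg_min_on (\<lambda>y. fst (f y)) R)))))"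

lemma hvc_eq_hv_width_mult_hv_height:
  "hvc f r1 r2 x P = hv_width f r1 x P * hv_height f r2 x P"
  by (simp add: hvc_def hv_width_def hv_height_def Let_def)

context
  fixes f :: "bool list \<Rightarrow> nat \<times> nat" and P :: "bool list set" and x :: "bool list" and k m :: nat
  assumes x_in_P: "x \<in> P"
    and non_dominated: "\<forall>a\<in>P. \<forall>b\<in>P. \<not> dominates f b a"
    and sum_le: "\<forall>z\<in>P. fst (f z) + snd (f z) \<le> k + m"
    and f_x: "f x = (k, m)"
begin

lemma hv_width:
  assumes "1 \<le> k" and "r1 \<le> -1"
  shows hv_width_eq_1: "(k - 1, m + 1) \<in> f ` P \<Longrightarrow> hv_width f r1 x P = 1"
    and hv_width_ge_2: "(k - 1, m + 1) \<notin> f ` P \<Longrightarrow> 2 \<le> hv_width f r1 x P"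
proof -
  define L where "L = {y \<in> P. fst (f y) < k}"
  have left_in_L: "z \<in> L" if "z \<in> P" "f z = (k - 1, m + 1)" for z
    using that \<open>1 \<le> k\<close> by (simp add: L_def)
  have "if (k - 1, m + 1) \<in> f ` P then hv_width f r1 x P = 1 else 2 \<le> hv_width f r1 x P"
  proof (cases "L = {}")
    case True
    then have "(k - 1, m + 1) \<notin> f ` P" using left_in_L by force
    moreover have "2 \<le> hv_width f r1 x P"
      using True f_x assms by (simp add: hv_width_def L_def)
    ultimately show ?thesis by simp
  next
    case False
    then obtain z0 where "z0 \<in> L" by blast
    define p where "p = arg_max_on (\<lambda>y. fst (f y)) L"
    have "p \<in> L \<and> (\<forall>y. y \<in> L \<longrightarrow> fst (f y) \<le> fst (f p))"
      unfolding p_def arg_max_on_def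
      by (rule arg_max_nat_lemma[of "\<lambda>y. y \<in> L" _ _ k, OF \<open>z0 \<in> L\<close>]) (simp add: L_def)
    then have "p \<in> P" and p_lt: "fst (f p) < k" and p_max: "\<And>y. y \<in> L \<Longrightarrow> fst (f y) \<le> fst (f p)"
      by (auto simp: L_def)
    have width: "hv_width f r1 x P = real k - real (fst (f p))"
      using False by (simp add: hv_width_def f_x flip: L_def p_def)
    have "fst (f p) = k - 1 \<longleftrightarrow> (k - 1, m + 1) \<in> f ` P"
    proof
      assume p_left: "fst (f p) = k - 1"
      have "\<not> dominates f x p" using non_dominated \<open>p \<in> P\<close> x_in_P by blast
      then have "m < snd (f p)" using p_left f_x \<open>1 \<le> k\<close> by (auto simp: dominates_def)
      moreover have "fst (f p) + snd (f p) \<le> k + m" using sum_le \<open>p \<in> P\<close> by blast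
      ultimately have "f p = (k - 1, m + 1)" using p_left \<open>1 \<le> k\<close> by (simp add: prod_eq_iff)
      then show "(k - 1, m + 1) \<in> f ` P" using \<open>p \<in> P\<close> by force
    next
      assume "(k - 1, m + 1) \<in> f ` P"
      then obtain z where "z \<in> P" "f z = (k - 1, m + 1)" by auto
      then have "k - 1 \<le> fst (f p)" using p_max left_in_L by fastforce
      then show "fst (f p) = k - 1" using p_lt by simp
    qed
    then show ?thesis using width p_lt by auto
  qed
  then show "(k - 1, m + 1) \<in> f ` P \<Longrightarrow> hv_width f r1 x P = 1"
    and "(k - 1, m + 1) \<notin> f ` P \<Longrightarrow> 2 \<le> hv_width f r1 x P"
    by simp_all
qed

lemma hv_height:
  assumes "finite P" and "1 \<le> m" and "r2 \<le> -1"
  shows hv_height_eq_1: "(k + 1, m - 1) \<in> f ` P \<Longrightarrow> hv_height f r2 x P = 1"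
    and hv_height_ge_2: "(k + 1, m - 1) \<notin> f ` P \<Longrightarrow> 2 \<le> hv_height f r2 x P"
proof -
  define R where "R = {y \<in> P. k < fst (f y)}"
  have right_in_R: "z \<in> R" if "z \<in> P" "f z = (k + 1, m - 1)" for z
    using that by (simp add: R_def)
  have "if (k + 1, m - 1) \<in> f ` P then hv_height f r2 x P = 1 else 2 \<le> hv_height f r2 x P"
  proof (cases "R = {}")
    case True
    then have "(k + 1, m - 1) \<notin> f ` P" using right_in_R by force
    moreover have "2 \<le> hv_height f r2 x P"
      using True f_x assms by (simp add: hv_height_def R_def)
    ultimately show ?thesis by simp
  next
    case False
    define q where "q = arg_min_on (\<lambda>y. fst (f y)) R"
    have "finite R" using \<open>finite P\<close> by (simp add: R_def)
    have "q \<in> R" unfolding q_def by (rule arg_min_if_finite(1)[OF \<open>finite R\<close> False])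
    then have "q \<in> P" and q_gt: "k < fst (f q)" by (auto simp: R_def)
    have q_min: "\<And>y. y \<in> R \<Longrightarrow> fst (f q) \<le> fst (f y)"
      unfolding q_def by (rule arg_min_least[OF \<open>finite R\<close> False])
    have height: "hv_height f r2 x P = real m - real (snd (f q))"
      using False by (simp add: hv_height_def f_x flip: R_def q_def)
    have "\<not> dominates f q x" using non_dominated \<open>q \<in> P\<close> x_in_P by blast
    then have q_lt: "snd (f q) < m" using q_gt f_x by (auto simp: dominates_def)
    have "snd (f q) = m - 1 \<longleftrightarrow> (k + 1, m - 1) \<in> f ` P"
    proof
      assume q_right: "snd (f q) = m - 1"
      have "fst (f q) + snd (f q) \<le> k + m" using sum_le \<open>q \<in> P\<close> by blast
      then have "f q = (k + 1, m - 1)" using q_right q_gt \<open>1 \<le> m\<close> by (simp add: prod_eq_iff)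
      then show "(k + 1, m - 1) \<in> f ` P" using \<open>q \<in> P\<close> by force
    next
      assume "(k + 1, m - 1) \<in> f ` P"
      then obtain z where "z \<in> P" and f_z: "f z = (k + 1, m - 1)" by auto
      then have "fst (f q) = k + 1" using q_min right_in_R q_gt by fastforce
      moreover have "\<not> dominates f z q" using non_dominated \<open>q \<in> P\<close> \<open>z \<in> P\<close> by blast
      ultimately show "snd (f q) = m - 1" using f_z q_lt by (auto simp: dominates_def)
    qed
    then show ?thesis using height q_lt by auto
  qed
  then show "(k + 1, m - 1) \<in> f ` P \<Longrightarrow> hv_height f r2 x P = 1"
    and "(k + 1, m - 1) \<notin> f ` P \<Longrightarrow> 2 \<le> hv_height f r2 x P"
    by simp_all
qed

lemma hvc_eq_1:
  assumes "finite P" and "1 \<le> k" and "1 \<le> m" and "r1 \<le> -1" and "r2 \<le> -1"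
    and "{(k - 1, m + 1), (k + 1, m - 1)} \<subseteq> f ` P"
  shows "hvc f r1 r2 x P = 1"
  using assms hv_width_eq_1 hv_height_eq_1 by (simp add: hvc_eq_hv_width_mult_hv_height)

lemma hvc_ge_2:
  assumes "finite P" and "1 \<le> k" and "1 \<le> m" and "r1 \<le> -1" and "r2 \<le> -1"
    and "\<not> {(k - 1, m + 1), (k + 1, m - 1)} \<subseteq> f ` P"
  shows "2 \<le> hvc f r1 r2 x P"
proof -
  have width: "1 \<le> hv_width f r1 x P"
    using hv_width_eq_1 hv_width_ge_2 assms by fastforce
  have height: "1 \<le> hv_height f r2 x P"
    using hv_height_eq_1 hv_height_ge_2 assms by fastforce
  consider "2 \<le> hv_width f r1 x P" | "2 \<le> hv_height f r2 x P"
    using assms hv_width_ge_2 hv_height_ge_2 by auto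
  then have "2 * 1 \<le> hv_width f r1 x P * hv_height f r2 x P"
  proof cases
    case 1
    then show ?thesis using height by (intro mult_mono) auto
  next
    case 2
    then show ?thesis using width by (subst mult.commute, intro mult_mono) auto
  qed
  then show ?thesis by (simp add: hvc_eq_hv_width_mult_hv_height)
qed

end

definition pareto_neighbours ::
  "nat \<Rightarrow> (bool list \<Rightarrow> nat \<times> nat) \<Rightarrow> bool list \<Rightarrow> bool list set" where
  "pareto_neighbours n f x = {y. hamming_neighbour x y \<and> y \<in> pareto_set n f}"

lemma good_iff_pareto_neighbours:
  "good n f P x \<longleftrightarrow> x \<in> P \<inter> pareto_set n f \<and> \<not> f ` pareto_neighbours n f x \<subseteq> f ` P"
  by (auto simp: good_def pareto_neighbours_def)

lemma diversity_favouring_hvcI: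
  assumes "r1 \<le> -1" and "r2 \<le> -1"
    and sum_le: "\<And>z. z \<in> space n \<Longrightarrow> fst (f z) + snd (f z) \<le> n"
    and front: "\<And>x. x \<in> pareto_set n f \<inter> S \<Longrightarrow>
      \<exists>k m. f x = (k, m) \<and> k + m = n \<and> 1 \<le> k \<and> 1 \<le> m
        \<and> f ` pareto_neighbours n f x = {(k - 1, m + 1), (k + 1, m - 1)}"
  shows "diversity_favouring n f (hvc f r1 r2) S"
  unfolding diversity_favouring_def
proof (intro allI impI ballI)
  fix P x y
  assume "population n f P"
    and x: "x \<in> P \<inter> pareto_set n f \<inter> S" and y: "y \<in> P \<inter> pareto_set n f \<inter> S"
    and "bad n f P x" and "good n f P y"
  then have "finite P" and non_dominated: "\<forall>a\<in>P. \<forall>b\<in>P. \<not> dominates f b a"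
    and P_sum_le: "\<forall>z\<in>P. fst (f z) + snd (f z) \<le> n"
    using sum_le by (auto simp: population_def)
  obtain kx mx where "f x = (kx, mx)" "kx + mx = n" "1 \<le> kx" "1 \<le> mx"
    and x_neighbours: "f ` pareto_neighbours n f x = {(kx - 1, mx + 1), (kx + 1, mx - 1)}"
    using front x by blast
  have "{(kx - 1, mx + 1), (kx + 1, mx - 1)} \<subseteq> f ` P"
    using \<open>bad n f P x\<close> x x_neighbours by (simp add: bad_def good_iff_pareto_neighbours)
  then have "hvc f r1 r2 x P = 1"
    using hvc_eq_1[of x P f kx mx] x non_dominated P_sum_le \<open>finite P\<close> assms
      \<open>f x = (kx, mx)\<close> \<open>kx + mx = n\<close> \<open>1 \<le> kx\<close> \<open>1 \<le> mx\<close> by simp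
  moreover obtain ky my where "f y = (ky, my)" "ky + my = n" "1 \<le> ky" "1 \<le> my"
    and y_neighbours: "f ` pareto_neighbours n f y = {(ky - 1, my + 1), (ky + 1, my - 1)}"
    using front y by blast
  have "\<not> {(ky - 1, my + 1), (ky + 1, my - 1)} \<subseteq> f ` P"
    using \<open>good n f P y\<close> y_neighbours by (simp add: good_iff_pareto_neighbours)
  then have "2 \<le> hvc f r1 r2 y P"
    using hvc_ge_2[of y P f ky my] y non_dominated P_sum_le \<open>finite P\<close> assms
      \<open>f y = (ky, my)\<close> \<open>ky + my = n\<close> \<open>1 \<le> ky\<close> \<open>1 \<le> my\<close> by simp
  ultimately show "hvc f r1 r2 x P < hvc f r1 r2 y P" by simp
qed

lemma hamming_neighbour_iff_flip:
  "hamming_neighbour x y \<longleftrightarrow> (\<exists>i < length x. y = x[i := \<not> x ! i])"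
proof
  assume "hamming_neighbour x y"
  then have len: "length y = length x"
    and one_diff: "card {i. i < length x \<and> x ! i \<noteq> y ! i} = 1"
    by (auto simp: hamming_neighbour_def)
  obtain i where diff: "{i. i < length x \<and> x ! i \<noteq> y ! i} = {i}"
    using card_1_singletonE[OF one_diff] .
  then have "i < length x" by auto
  moreover have "y = x[i := \<not> x ! i]"
  proof (rule nth_equalityI)
    fix j assume "j < length y"
    then show "y ! j = x[i := \<not> x ! i] ! j"
      using len diff by (cases "j = i") (auto simp: nth_list_update)
  qed (simp add: len)
  ultimately show "\<exists>i < length x. y = x[i := \<not> x ! i]" by blast
next
  assume "\<exists>i < length x. y = x[i := \<not> x ! i]"
  then obtain i where "i < length x" "y = x[i := \<not> x ! i]" by blast
  then have "{j. j < length x \<and> x ! j \<noteq> y ! j} = {i}"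
    by (auto simp: nth_list_update)
  then show "hamming_neighbour x y" using \<open>y = _\<close> by (simp add: hamming_neighbour_def)
qed

lemma count_list_flip:
  assumes "i < length x"
  shows "count_list (x[i := \<not> x ! i]) True
           = (if x ! i then count_list x True - 1 else Suc (count_list x True))"
proof -
  have "count_list x True = count_list (take i x @ x ! i # drop (Suc i) x) True"
    using id_take_nth_drop[OF assms] by simp
  then show ?thesis
    using assms by (simp add: upd_conv_take_nth_drop)
qed

lemma pareto_set_OneMinMax: "pareto_set n OneMinMax = space n"
proof -
  have "\<not> dominates OneMinMax y x" if "x \<in> space n" "y \<in> space n" for x y
    using that count_le_length[of x True] count_le_length[of y True]
    by (auto simp: space_def dominates_def OneMinMax_def)
  then show ?thesis by (auto simp: pareto_set_def)
qed

lemma count_list_True_pos_iff: "0 < count_list x True \<longleftrightarrow> True \<in> set x"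
  using count_list_0_iff[of x True] by auto

lemma count_list_True_less_length_iff: "count_list x True < length x \<longleftrightarrow> False \<in> set x"
proof
  assume "count_list x True < length x"
  then have "filter ((=) True) x \<noteq> x" by (auto simp: count_list_eq_length_filter)
  then show "False \<in> set x" by (auto simp: filter_id_conv)
next
  assume "False \<in> set x"
  then have "length (filter ((=) True) x) < length x" by (rule length_filter_less) simp
  then show "count_list x True < length x" by (simp add: count_list_eq_length_filter)
qed

lemma True_False_in_set_if_non_constant:
  assumes "x \<in> space n - {replicate n False, replicate n True}"
  shows "True \<in> set x" and "False \<in> set x"
proof -
  have len: "length x = n" using assms by (simp add: space_def)
  show "True \<in> set x"
  proof (rule ccontr)
    assume "True \<notin> set x"
    then have "x = replicate n False" using len by (intro replicate_eqI) auto
    then show False using assms by simp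
  qed
  show "False \<in> set x"
  proof (rule ccontr)
    assume "False \<notin> set x"
    then have "x = replicate n True" using len by (intro replicate_eqI) (auto, metis (full_types))
    then show False using assms by simp
  qed
qed

lemma OneMinMax_pareto_neighbours:
  assumes "x \<in> space n" and "True \<in> set x" and "False \<in> set x"
  defines "k \<equiv> count_list x True"
  shows "OneMinMax ` pareto_neighbours n OneMinMax x = {(k - 1, n - k + 1), (k + 1, n - k - 1)}"
proof -
  have len: "length x = n" using assms by (simp add: space_def)
  have "0 < k" using \<open>True \<in> set x\<close> count_list_True_pos_iff[of x] by (simp add: k_def)
  have "k < n" using \<open>False \<in> set x\<close> len count_list_True_less_length_iff[of x] by (simp add: k_def)
  have flip: "OneMinMax (x[i := \<not> x ! i])
      = (if x ! i then (k - 1, n - k + 1) else (k + 1, n - k - 1))" if "i < n" for i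
    using that \<open>0 < k\<close> \<open>k < n\<close> len count_list_flip[of i x] by (auto simp: k_def OneMinMax_def)
  have "pareto_neighbours n OneMinMax x = (\<lambda>i. x[i := \<not> x ! i]) ` {..<n}"
    using len
    by (auto simp: pareto_neighbours_def pareto_set_OneMinMax hamming_neighbour_iff_flip space_def)
  then have "OneMinMax ` pareto_neighbours n OneMinMax x
      = (\<lambda>i. if x ! i then (k - 1, n - k + 1) else (k + 1, n - k - 1)) ` {..<n}"
    using flip by (simp add: image_image)
  moreover obtain i where "i < n" "x ! i"
    using \<open>True \<in> set x\<close> len by (auto simp: in_set_conv_nth)
  moreover obtain j where "j < n" "\<not> x ! j"
    using \<open>False \<in> set x\<close> len by (auto simp: in_set_conv_nth)
  ultimately show ?thesis by (auto intro: image_eqI[of _ _ i] image_eqI[of _ _ j])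
qed

lemma nth_if_less_LO: "i < LO x \<Longrightarrow> x ! i"
  unfolding LO_def by (metis nth_mem set_takeWhileD takeWhile_nth)

lemma not_nth_if_ge_length_minus_TZ: "length x - TZ x \<le> i \<Longrightarrow> i < length x \<Longrightarrow> \<not> x ! i"
proof -
  assume "length x - TZ x \<le> i" "i < length x"
  then have "length x - Suc i < length (takeWhile Not (rev x))" by (simp add: TZ_def)
  then have "\<not> rev x ! (length x - Suc i)"
    by (metis nth_mem set_takeWhileD takeWhile_nth)
  then show "\<not> x ! i" using \<open>i < length x\<close> by (simp add: rev_nth Suc_diff_Suc)
qed

lemma LO_le_length: "LO x \<le> length x"
  unfolding LO_def by (rule length_takeWhile_le)

lemma TZ_le_length: "TZ x \<le> length x"
  unfolding TZ_def by (metis length_rev length_takeWhile_le)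

lemma LO_plus_TZ_le: "LO x + TZ x \<le> length x"
proof (rule ccontr)
  assume "\<not> LO x + TZ x \<le> length x"
  then have "0 < LO x" using TZ_le_length[of x] by linarith
  from \<open>\<not> _\<close> have "length x - TZ x \<le> LO x - 1" "LO x - 1 < length x"
    using LO_le_length[of x] TZ_le_length[of x] by linarith+
  then show False
    using nth_if_less_LO[of "LO x - 1" x] not_nth_if_ge_length_minus_TZ \<open>0 < LO x\<close> by force
qed

lemma eq_replicate_LO_TZ:
  assumes "LO x + TZ x = length x"
  shows "x = replicate (LO x) True @ replicate (TZ x) False"
proof (rule nth_equalityI)
  fix i assume "i < length x"
  then show "x ! i = (replicate (LO x) True @ replicate (TZ x) False) ! i"
    using assms nth_if_less_LO[of i x] not_nth_if_ge_length_minus_TZ[of x i]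
    by (auto simp: nth_append)
qed (use assms in simp)

definition ones_zeros :: "nat \<Rightarrow> nat \<Rightarrow> bool list" where
  "ones_zeros n i = replicate i True @ replicate (n - i) False"

lemma LOTZ_ones_zeros: "i \<le> n \<Longrightarrow> LOTZ (ones_zeros n i) = (i, n - i)"
  by (simp add: LOTZ_def LO_def TZ_def ones_zeros_def takeWhile_append)

lemma length_ones_zeros: "i \<le> n \<Longrightarrow> length (ones_zeros n i) = n"
  by (simp add: ones_zeros_def)

lemma nth_ones_zeros: "i \<le> n \<Longrightarrow> p < n \<Longrightarrow> ones_zeros n i ! p \<longleftrightarrow> p < i"
  by (simp add: ones_zeros_def nth_append)

lemma pareto_set_LOTZ: "pareto_set n LOTZ = ones_zeros n ` {..n}"
proof
  show "pareto_set n LOTZ \<subseteq> ones_zeros n ` {..n}"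
  proof
    fix x assume x: "x \<in> pareto_set n LOTZ"
    then have len: "length x = n" by (simp add: pareto_set_def space_def)
    have "ones_zeros n (LO x) \<in> space n"
      using LO_le_length[of x] len by (simp add: length_ones_zeros space_def)
    then have "\<not> dominates LOTZ (ones_zeros n (LO x)) x"
      using x by (auto simp: pareto_set_def)
    moreover have "LOTZ (ones_zeros n (LO x)) = (LO x, n - LO x)"
      using LOTZ_ones_zeros LO_le_length[of x] len by simp
    ultimately have "\<not> TZ x < n - LO x" by (auto simp: dominates_def LOTZ_def)
    then have "LO x + TZ x = n" using LO_plus_TZ_le[of x] len by linarith
    then have "x = ones_zeros n (LO x)"
      using eq_replicate_LO_TZ[of x] len by (simp add: ones_zeros_def flip: \<open>LO x + TZ x = n\<close>)
    then show "x \<in> ones_zeros n ` {..n}" using LO_le_length[of x] len by auto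
  qed
next
  show "ones_zeros n ` {..n} \<subseteq> pareto_set n LOTZ"
  proof
    fix x assume "x \<in> ones_zeros n ` {..n}"
    then obtain i where "i \<le> n" and x: "x = ones_zeros n i" by blast
    have "\<not> dominates LOTZ y x" if "y \<in> space n" for y
      using LO_plus_TZ_le[of y] that LOTZ_ones_zeros[OF \<open>i \<le> n\<close>]
      by (auto simp: x dominates_def LOTZ_def space_def)
    moreover have "x \<in> space n" using \<open>i \<le> n\<close> by (simp add: x length_ones_zeros space_def)
    ultimately show "x \<in> pareto_set n LOTZ" by (simp add: pareto_set_def)
  qed
qed

lemma hamming_neighbour_ones_zeros:
  assumes "i \<le> n" and "j \<le> n"
  shows "hamming_neighbour (ones_zeros n i) (ones_zeros n j) \<longleftrightarrow> i = j + 1 \<or> j = i + 1"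
proof -
  have "{p. p < length (ones_zeros n i) \<and> ones_zeros n i ! p \<noteq> ones_zeros n j ! p}
      = {min i j..<max i j}"
    using assms by (auto simp: length_ones_zeros nth_ones_zeros)
  then have "hamming_neighbour (ones_zeros n i) (ones_zeros n j) \<longleftrightarrow> max i j - min i j = 1"
    using assms by (simp add: hamming_neighbour_def length_ones_zeros)
  then show ?thesis by linarith
qed

lemma LOTZ_pareto_neighbours:
  assumes "1 \<le> k" and "k < n"
  shows "LOTZ ` pareto_neighbours n LOTZ (ones_zeros n k)
           = {(k - 1, n - k + 1), (k + 1, n - k - 1)}"
proof -
  have "pareto_neighbours n LOTZ (ones_zeros n k) = ones_zeros n ` {k - 1, k + 1}"
  proof (intro equalityI subsetI)
    fix y assume "y \<in> pareto_neighbours n LOTZ (ones_zeros n k)"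
    then obtain j where "j \<le> n" and "y = ones_zeros n j"
      and "hamming_neighbour (ones_zeros n k) (ones_zeros n j)"
      by (auto simp: pareto_neighbours_def pareto_set_LOTZ)
    moreover from this have "j = k - 1 \<or> j = k + 1"
      using hamming_neighbour_ones_zeros[of k n j] assms by auto
    ultimately show "y \<in> ones_zeros n ` {k - 1, k + 1}" by auto
  next
    fix y assume "y \<in> ones_zeros n ` {k - 1, k + 1}"
    then show "y \<in> pareto_neighbours n LOTZ (ones_zeros n k)"
      using hamming_neighbour_ones_zeros[of k n] assms
      by (auto simp: pareto_neighbours_def pareto_set_LOTZ)
  qed
  then show ?thesis using assms by (simp add: LOTZ_ones_zeros Suc_diff_le)
qed

lemma diversity_favouring_hvc_OneMinMax:
  assumes "r1 \<le> -1" and "r2 \<le> -1"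
  shows "diversity_favouring n OneMinMax (hvc OneMinMax r1 r2)
           (space n - {replicate n False, replicate n True})"
proof (rule diversity_favouring_hvcI[OF assms])
  show "fst (OneMinMax z) + snd (OneMinMax z) \<le> n" if "z \<in> space n" for z
    using that count_le_length[of z True] by (simp add: OneMinMax_def space_def)
next
  fix x assume x: "x \<in> pareto_set n OneMinMax \<inter> (space n - {replicate n False, replicate n True})"
  then have "True \<in> set x" and "False \<in> set x" and "length x = n"
    using True_False_in_set_if_non_constant by (auto simp: space_def)
  then show "\<exists>k m. OneMinMax x = (k, m) \<and> k + m = n \<and> 1 \<le> k \<and> 1 \<le> m
      \<and> OneMinMax ` pareto_neighbours n OneMinMax x = {(k - 1, m + 1), (k + 1, m - 1)}"
    using OneMinMax_pareto_neighbours[of x n] x count_list_True_pos_iff[of x]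
      count_list_True_less_length_iff[of x]
    by (auto simp: OneMinMax_def space_def)
qed

lemma diversity_favouring_hvc_LOTZ:
  assumes "r1 \<le> -1" and "r2 \<le> -1"
  shows "diversity_favouring n LOTZ (hvc LOTZ r1 r2)
           (space n - {replicate n False, replicate n True})"
proof (rule diversity_favouring_hvcI[OF assms])
  show "fst (LOTZ z) + snd (LOTZ z) \<le> n" if "z \<in> space n" for z
    using that LO_plus_TZ_le[of z] by (simp add: LOTZ_def space_def)
next
  fix x assume x: "x \<in> pareto_set n LOTZ \<inter> (space n - {replicate n False, replicate n True})"
  then obtain k where "k \<le> n" and x_eq: "x = ones_zeros n k" by (auto simp: pareto_set_LOTZ)
  moreover have "True \<in> set x" and "False \<in> set x"
    using x True_False_in_set_if_non_constant by auto
  ultimately have "1 \<le> k" and "k < n" by (auto simp: ones_zeros_def)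
  then show "\<exists>k m. LOTZ x = (k, m) \<and> k + m = n \<and> 1 \<le> k \<and> 1 \<le> m
      \<and> LOTZ ` pareto_neighbours n LOTZ x = {(k - 1, m + 1), (k + 1, m - 1)}"
    using x_eq LOTZ_ones_zeros[of k n] LOTZ_pareto_neighbours[of k n] by auto
qed

theorem lemma1:
  fixes n :: nat and r1 r2 :: real
  assumes "r1 \<le> -1" and "r2 \<le> -1"
  shows "diversity_favouring n OneMinMax (hvc OneMinMax r1 r2)
           (space n - {replicate n False, replicate n True})
       \<and> diversity_favouring n LOTZ (hvc LOTZ r1 r2)
           (space n - {replicate n False, replicate n True})"
  using diversity_favouring_hvc_OneMinMax[OF assms] diversity_favouring_hvc_LOTZ[OF assms] by blast

end
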